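(* Let $A_1,\dots,A_n$ be formulae built from variables other than $q$ using only $\cdot$, $\backslash$, $/$. For $i=1,\dots,n$ let $Z_i=([]^{-1}(!A_i\cdot\langle\rangle\langle\rangle q))/q$, and let $$\Phi = !((s/s)/!Z_1),\ !Z_1,\ \dots,\ !((s/s)/!Z_n),\ !Z_n,\ !((s/s)/\langle\rangle\langle\rangle q),\ [[q]].$$ Let $\mathcal{S}$ be either $\mathcal{F}^{\mathrm{mult}}_{2018}$ or $\mathcal{F}^{-,\mathrm{mult}}_{2018}$. Then $\Phi$ internalises $\{A_1,\dots,A_n\}$ in $\mathcal{S}$, that is: (1) the sequent $\Phi,s\to s$ is derivable in $\mathcal{S}$; (2) for every $i$, all sequences of tree terms $\Delta_1,\Delta_2$ and every formula $C$, if $\Phi,\Delta_1,A_i,\Delta_2\to C$ is derivable in $\mathcal{S}$ then so is $\Phi,\Delta_1,\Delta_2\to C$; (3) the sequent $!A_1,\dots,!A_n\to\prod\pi_q(\Phi)$ is derivable in $\mathcal{E}^{\mathrm{mult}}$.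
   Context: $s$ and $q$ are two fixed distinct variables. Formulae are built from a countable set of variables and $\mathbf1$ by $\backslash,/,\cdot$ and the unary $\langle\rangle$, $[]^{-1}$, $!$. Stoup-free bracketed calculus $\mathcal{F}^{\mathrm{mult}}_{2018}$: a tree term is a formula or $[\Xi]$ with $\Xi$ a meta-formula; a meta-formula is a finite sequence of tree terms (empty $\Lambda$); sequents $\Xi\to C$; $\Xi(\Theta)$ designates an occurrence of a meta-formula $\Theta$ which is $\Xi$ itself or the full content of some bracket $[\Theta]$ at any depth. Rules: axioms $A\to A$, $\Lambda\to\mathbf1$; ($/L$) from $\Gamma\to B$ and $\Xi(\Delta_1,C,\Delta_2)\to D$ infer $\Xi(\Delta_1,C/B,\Gamma,\Delta_2)\to D$; ($/R$) from $\Gamma,B\to C$ infer $\Gamma\to C/B$; ($\backslash L$) from $\Gamma\to A$ and $\Xi(\Delta_1,C,\Delta_2)\to D$ infer $\Xi(\Delta_1,\Gamma,A\backslash C,\Delta_2)\to D$; ($\backslash R$) from $A,\Gamma\to C$ infer $\Gamma\to A\backslash C$; ($\cdot L$) from $\Xi(\Delta_1,A,B,\Delta_2)\to D$ infer $\Xi(\Delta_1,A\cdot B,\Delta_2)\to D$; ($\cdot R$) from $\Delta\to A$ and $\Gamma\to B$ infer $\Delta,\Gamma\to A\cdot B$; ($\mathbf1L$) from $\Xi(\Delta_1,\Delta_2)\to A$ infer $\Xi(\Delta_1,\mathbf1,\Delta_2)\to A$; ($[]^{-1}L$) from $\Xi(\Delta_1,A,\Delta_2)\to B$ infer $\Xi(\Delta_1,[[]^{-1}A],\Delta_2)\to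 B$; ($[]^{-1}R$) from $[\Xi]\to A$ infer $\Xi\to[]^{-1}A$; ($\langle\rangle L$) from $\Xi(\Delta_1,[A],\Delta_2)\to B$ infer $\Xi(\Delta_1,\langle\rangle A,\Delta_2)\to B$; ($\langle\rangle R$) from $\Xi\to A$ infer $[\Xi]\to\langle\rangle A$; ($!L$) from $\Xi(\Delta_1,A,\Delta_2)\to C$ infer $\Xi(\Delta_1,!A,\Delta_2)\to C$; ($!P_1$) from $\Xi(\Delta_1,!A,\Phi,\Delta_2)\to C$ infer $\Xi(\Delta_1,\Phi,!A,\Delta_2)\to C$; ($!P_2$) the converse; ($!R$) from $!A\to B$ infer $!A\to!B$; ($!C$) from $\Xi(!A,\Gamma_1,[!A,\Gamma_2],\Gamma_3)\to C$ infer $\Xi(!A,\Gamma_1,[[\Gamma_2]],\Gamma_3)\to C$; (cut) from $\Pi\to A$ and $\Xi(\Gamma_1,A,\Gamma_2)\to C$ infer $\Xi(\Gamma_1,\Pi,\Gamma_2)\to C$. $\mathcal{F}^{-,\mathrm{mult}}_{2018}$ is $\mathcal{F}^{\mathrm{mult}}_{2018}$ restricted to formulae without $\mathbf1$, without $\Lambda\to\mathbf1$ and $\mathbf1L$, with $\backslash R,/R$ only if $\Gamma\neq\Lambda$ and $!C$ only if $\Gamma_2\neq\Lambda$. Bracket-free calculus $\mathcal{E}^{\mathrm{mult}}$: formulae without bracket modalities; sequents $\Pi\to A$, $\Pi$ a finite sequence of formulae; axioms $A\to A$, $\Lambda\to\mathbf1$; standard Lambek rules ($\backslash L$: from $\Pi\to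 A$ and $\Delta_1,B,\Delta_2\to C$ infer $\Delta_1,\Pi,A\backslash B,\Delta_2\to C$; $\backslash R$; $/L$: from $\Pi\to A$ and $\Delta_1,B,\Delta_2\to C$ infer $\Delta_1,B/A,\Pi,\Delta_2\to C$; $/R$; $\cdot L$; $\cdot R$; $\mathbf1L$); ($!R$) from $!A_1,\dots,!A_m\to B$ infer $!A_1,\dots,!A_m\to!B$ ($m\geq0$); ($!L$) from $\Delta_1,A,\Delta_2\to C$ infer $\Delta_1,!A,\Delta_2\to C$; ($!P_{1,2}$) permuting $!A$ with any sequence in either direction; ($!C$) from $\Delta_1,!A,!A,\Delta_2\to C$ infer $\Delta_1,!A,\Delta_2\to C$; ($!W$) from $\Delta_1,\Delta_2\to C$ infer $\Delta_1,!A,\Delta_2\to C$; (cut). The projection $\pi_q$ maps formulae by $\pi_q(q)=\mathbf1$, $\pi_q(p)=p$ for variables $p\ne q$, $\pi_q(\mathbf1)=\mathbf1$, commuting with $\backslash,/,\cdot,!$, and $\pi_q(\langle\rangle A)=\pi_q([]^{-1}A)=\pi_q(A)$; on meta-formulae it is applied elementwise and erases brackets. For a sequence $E_1,\dots,E_k$ of formulae, $\prod(E_1,\dots,E_k)=E_1\cdot\ldots\cdot E_k$. *)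

theory Defs
  imports Main
begin

text \<open>Variables are natural numbers (a countable set).
  Under A C is A\C, Over C B is C/B, Dia A is the bracket modality angle-brackets A,
  Box A is the inverse bracket modality A, Bang A is !A.\<close>

datatype fm =
    Var nat
  | One
  | Under fm fm
  | Over fm fm
  | Prod fm fm
  | Dia fm
  | Box fm
  | Bang fm

text \<open>Tree terms: a formula or a bracketed meta-formula; meta-formulae are lists of tree terms.\<close>

datatype tt = F fm | Br "tt list"

text \<open>Contexts: an occurrence of a meta-formula as the whole thing, or as the
  full content of some bracket at any depth.\<close>

datatype ctx = Hole | CBr "tt list" ctx "tt list"

fun plug :: "ctx \<Rightarrow> tt list \<Rightarrow> tt list" where
  "plug Hole Th = Th"
| "plug (CBr L c R) Th = L @ [Br (plug c Th)] @ R"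

fun onefree :: "fm \<Rightarrow> bool" where
  "onefree (Var p) = True"
| "onefree One = False"
| "onefree (Under A B) = (onefree A \<and> onefree B)"
| "onefree (Over A B) = (onefree A \<and> onefree B)"
| "onefree (Prod A B) = (onefree A \<and> onefree B)"
| "onefree (Dia A) = onefree A"
| "onefree (Box A) = onefree A"
| "onefree (Bang A) = onefree A"

fun bracketfree :: "fm \<Rightarrow> bool" where
  "bracketfree (Var p) = True"
| "bracketfree One = True"
| "bracketfree (Under A B) = (bracketfree A \<and> bracketfree B)"
| "bracketfree (Over A B) = (bracketfree A \<and> bracketfree B)"
| "bracketfree (Prod A B) = (bracketfree A \<and> bracketfree B)"
| "bracketfree (Dia A) = False"
| "bracketfree (Box A) = False"
| "bracketfree (Bang A) = bracketfree A"

fun lambek_noq :: "nat \<Rightarrow> fm \<Rightarrow> bool" where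
  "lambek_noq q (Var p) = (p \<noteq> q)"
| "lambek_noq q (Under A B) = (lambek_noq q A \<and> lambek_noq q B)"
| "lambek_noq q (Over A B) = (lambek_noq q A \<and> lambek_noq q B)"
| "lambek_noq q (Prod A B) = (lambek_noq q A \<and> lambek_noq q B)"
| "lambek_noq q _ = False"

fun tt_fms :: "tt \<Rightarrow> fm list" and mf_fms :: "tt list \<Rightarrow> fm list" where
  "tt_fms (F A) = [A]"
| "tt_fms (Br G) = mf_fms G"
| "mf_fms [] = []"
| "mf_fms (t # ts) = tt_fms t @ mf_fms ts"

text \<open>Side condition for the restricted calculus (restr = True): no occurrence of 1
  in any sequent of the derivation.\<close>

definition okF :: "bool \<Rightarrow> tt list \<Rightarrow> fm \<Rightarrow> bool" where
  "okF restr G C \<longleftrightarrow> (restr \<longrightarrow> (list_all onefree (mf_fms G) \<and> onefree C))"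

section \<open>Stoup-free bracketed calculus F^mult_2018 (restr = False)
  and its restriction F^{-,mult}_2018 (restr = True)\<close>

inductive Fder :: "bool \<Rightarrow> tt list \<Rightarrow> fm \<Rightarrow> bool" for m :: bool where
  ax: "okF m [F A] A \<Longrightarrow> Fder m [F A] A"
| oneR: "\<not> m \<Longrightarrow> Fder m [] One"
| overL: "\<lbrakk> Fder m G B; Fder m (plug c (D1 @ [F C] @ D2)) D;
           okF m (plug c (D1 @ [F (Over C B)] @ G @ D2)) D \<rbrakk>
          \<Longrightarrow> Fder m (plug c (D1 @ [F (Over C B)] @ G @ D2)) D"
| overR: "\<lbrakk> Fder m (G @ [F B]) C; m \<longrightarrow> G \<noteq> []; okF m G (Over C B) \<rbrakk>
          \<Longrightarrow> Fder m G (Over C B)"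
| underL: "\<lbrakk> Fder m G A; Fder m (plug c (D1 @ [F C] @ D2)) D;
           okF m (plug c (D1 @ G @ [F (Under A C)] @ D2)) D \<rbrakk>
          \<Longrightarrow> Fder m (plug c (D1 @ G @ [F (Under A C)] @ D2)) D"
| underR: "\<lbrakk> Fder m ([F A] @ G) C; m \<longrightarrow> G \<noteq> []; okF m G (Under A C) \<rbrakk>
          \<Longrightarrow> Fder m G (Under A C)"
| prodL: "\<lbrakk> Fder m (plug c (D1 @ [F A, F B] @ D2)) D;
           okF m (plug c (D1 @ [F (Prod A B)] @ D2)) D \<rbrakk>
          \<Longrightarrow> Fder m (plug c (D1 @ [F (Prod A B)] @ D2)) D"
| prodR: "\<lbrakk> Fder m D A; Fder m G B; okF m (D @ G) (Prod A B) \<rbrakk>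
          \<Longrightarrow> Fder m (D @ G) (Prod A B)"
| oneL: "\<lbrakk> \<not> m; Fder m (plug c (D1 @ D2)) A \<rbrakk>
          \<Longrightarrow> Fder m (plug c (D1 @ [F One] @ D2)) A"
| boxL: "\<lbrakk> Fder m (plug c (D1 @ [F A] @ D2)) B;
           okF m (plug c (D1 @ [Br [F (Box A)]] @ D2)) B \<rbrakk>
          \<Longrightarrow> Fder m (plug c (D1 @ [Br [F (Box A)]] @ D2)) B"
| boxR: "\<lbrakk> Fder m [Br X] A; okF m X (Box A) \<rbrakk> \<Longrightarrow> Fder m X (Box A)"
| diaL: "\<lbrakk> Fder m (plug c (D1 @ [Br [F A]] @ D2)) B;
           okF m (plug c (D1 @ [F (Dia A)] @ D2)) B \<rbrakk>
          \<Longrightarrow> Fder m (plug c (D1 @ [F (Dia A)] @ D2)) B"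
| diaR: "\<lbrakk> Fder m X A; okF m [Br X] (Dia A) \<rbrakk> \<Longrightarrow> Fder m [Br X] (Dia A)"
| bangL: "\<lbrakk> Fder m (plug c (D1 @ [F A] @ D2)) C;
           okF m (plug c (D1 @ [F (Bang A)] @ D2)) C \<rbrakk>
          \<Longrightarrow> Fder m (plug c (D1 @ [F (Bang A)] @ D2)) C"
| bangP1: "\<lbrakk> Fder m (plug c (D1 @ [F (Bang A)] @ P @ D2)) C;
           okF m (plug c (D1 @ P @ [F (Bang A)] @ D2)) C \<rbrakk>
          \<Longrightarrow> Fder m (plug c (D1 @ P @ [F (Bang A)] @ D2)) C"
| bangP2: "\<lbrakk> Fder m (plug c (D1 @ P @ [F (Bang A)] @ D2)) C;
           okF m (plug c (D1 @ [F (Bang A)] @ P @ D2)) C \<rbrakk>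
          \<Longrightarrow> Fder m (plug c (D1 @ [F (Bang A)] @ P @ D2)) C"
| bangR: "\<lbrakk> Fder m [F (Bang A)] B; okF m [F (Bang A)] (Bang B) \<rbrakk>
          \<Longrightarrow> Fder m [F (Bang A)] (Bang B)"
| bangC: "\<lbrakk> Fder m (plug c ([F (Bang A)] @ G1 @ [Br ([F (Bang A)] @ G2)] @ G3)) C;
           m \<longrightarrow> G2 \<noteq> [];
           okF m (plug c ([F (Bang A)] @ G1 @ [Br [Br G2]] @ G3)) C \<rbrakk>
          \<Longrightarrow> Fder m (plug c ([F (Bang A)] @ G1 @ [Br [Br G2]] @ G3)) C"
| cut: "\<lbrakk> Fder m P A; Fder m (plug c (G1 @ [F A] @ G2)) C;
           okF m (plug c (G1 @ P @ G2)) C \<rbrakk>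
          \<Longrightarrow> Fder m (plug c (G1 @ P @ G2)) C"

definition okE :: "fm list \<Rightarrow> fm \<Rightarrow> bool" where
  "okE G C \<longleftrightarrow> list_all bracketfree G \<and> bracketfree C"

inductive Eder :: "fm list \<Rightarrow> fm \<Rightarrow> bool" where
  ax: "okE [A] A \<Longrightarrow> Eder [A] A"
| oneR: "Eder [] One"
| underL: "\<lbrakk> Eder P A; Eder (D1 @ [B] @ D2) C; okE (D1 @ P @ [Under A B] @ D2) C \<rbrakk>
          \<Longrightarrow> Eder (D1 @ P @ [Under A B] @ D2) C"
| underR: "\<lbrakk> Eder (A # G) C; okE G (Under A C) \<rbrakk> \<Longrightarrow> Eder G (Under A C)"
| overL: "\<lbrakk> Eder P A; Eder (D1 @ [B] @ D2) C; okE (D1 @ [Over B A] @ P @ D2) C \<rbrakk>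
          \<Longrightarrow> Eder (D1 @ [Over B A] @ P @ D2) C"
| overR: "\<lbrakk> Eder (G @ [B]) C; okE G (Over C B) \<rbrakk> \<Longrightarrow> Eder G (Over C B)"
| prodL: "\<lbrakk> Eder (D1 @ [A, B] @ D2) C; okE (D1 @ [Prod A B] @ D2) C \<rbrakk>
          \<Longrightarrow> Eder (D1 @ [Prod A B] @ D2) C"
| prodR: "\<lbrakk> Eder D A; Eder G B; okE (D @ G) (Prod A B) \<rbrakk> \<Longrightarrow> Eder (D @ G) (Prod A B)"
| oneL: "\<lbrakk> Eder (D1 @ D2) A; okE (D1 @ [One] @ D2) A \<rbrakk> \<Longrightarrow> Eder (D1 @ [One] @ D2) A"
| bangR: "\<lbrakk> Eder (map Bang As) B; okE (map Bang As) (Bang B) \<rbrakk>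
          \<Longrightarrow> Eder (map Bang As) (Bang B)"
| bangL: "\<lbrakk> Eder (D1 @ [A] @ D2) C; okE (D1 @ [Bang A] @ D2) C \<rbrakk>
          \<Longrightarrow> Eder (D1 @ [Bang A] @ D2) C"
| bangP1: "\<lbrakk> Eder (D1 @ [Bang A] @ P @ D2) C; okE (D1 @ P @ [Bang A] @ D2) C \<rbrakk>
          \<Longrightarrow> Eder (D1 @ P @ [Bang A] @ D2) C"
| bangP2: "\<lbrakk> Eder (D1 @ P @ [Bang A] @ D2) C; okE (D1 @ [Bang A] @ P @ D2) C \<rbrakk>
          \<Longrightarrow> Eder (D1 @ [Bang A] @ P @ D2) C"
| bangC: "\<lbrakk> Eder (D1 @ [Bang A, Bang A] @ D2) C; okE (D1 @ [Bang A] @ D2) C \<rbrakk>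
          \<Longrightarrow> Eder (D1 @ [Bang A] @ D2) C"
| bangW: "\<lbrakk> Eder (D1 @ D2) C; okE (D1 @ [Bang A] @ D2) C \<rbrakk>
          \<Longrightarrow> Eder (D1 @ [Bang A] @ D2) C"
| cut: "\<lbrakk> Eder P A; Eder (G1 @ [A] @ G2) C; okE (G1 @ P @ G2) C \<rbrakk>
          \<Longrightarrow> Eder (G1 @ P @ G2) C"

fun pi_q :: "nat \<Rightarrow> fm \<Rightarrow> fm" where
  "pi_q q (Var p) = (if p = q then One else Var p)"
| "pi_q q One = One"
| "pi_q q (Under A B) = Under (pi_q q A) (pi_q q B)"
| "pi_q q (Over A B) = Over (pi_q q A) (pi_q q B)"
| "pi_q q (Prod A B) = Prod (pi_q q A) (pi_q q B)"
| "pi_q q (Dia A) = pi_q q A"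
| "pi_q q (Box A) = pi_q q A"
| "pi_q q (Bang A) = Bang (pi_q q A)"

definition pi_mf :: "nat \<Rightarrow> tt list \<Rightarrow> fm list" where
  "pi_mf q G = map (pi_q q) (mf_fms G)"

fun prodl :: "fm list \<Rightarrow> fm" where
  "prodl [] = One"
| "prodl [E] = E"
| "prodl (E # Es) = Prod E (prodl Es)"

definition Zf :: "nat \<Rightarrow> fm \<Rightarrow> fm" where
  "Zf q A = Over (Box (Prod (Bang A) (Dia (Dia (Var q))))) (Var q)"

definition Phi :: "nat \<Rightarrow> nat \<Rightarrow> fm list \<Rightarrow> tt list" where
  "Phi s q As =
     concat (map (\<lambda>A. [F (Bang (Over (Over (Var s) (Var s)) (Bang (Zf q A)))),
                        F (Bang (Zf q A))]) As)
     @ [F (Bang (Over (Over (Var s) (Var s)) (Dia (Dia (Var q))))),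
        Br [Br [F (Var q)]]]"

end

theory Submission
  imports Defs
begin

(* (1) Each !((s/s)/B) in Phi consumes the B-part that follows it (!Z_i, resp. [[q]], which
   derives <><>q) together with the final s.
   (2) A copy !A_i of the extra A_i is moved next to [[q]], which is opened to <><>q; the product
   !A_i . <><>q is derivable from [Z_i, q], so a cut turns it into the bracket [!Z_i, q], and !C,
   using the copy of !Z_i in Phi, contracts that bracket back into [[q]].
   (3) pi_q sends <><>q and [[q]] to 1, so pi_q(!Z_i) = !((!A_i . 1)/1) is derivable from !A_i,
   and every !((s/s)/B) is derivable from no hypotheses by !W or 1L. *)

lemma mf_fms_append [simp]: "mf_fms (xs @ ys) = mf_fms xs @ mf_fms ys"
  by (induct xs) auto

fun ctx_fms :: "ctx \<Rightarrow> fm list" where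
  "ctx_fms Hole = []"
| "ctx_fms (CBr L c R) = mf_fms L @ ctx_fms c @ mf_fms R"

lemma set_mf_fms_plug [simp]: "set (mf_fms (plug c X)) = set (ctx_fms c) \<union> set (mf_fms X)"
  by (induct c) auto

lemma Fder_okF: "Fder m G C \<Longrightarrow> okF m G C"
  by (induct rule: Fder.induct) (auto simp: okF_def)

lemma Fder_axiom: "m \<longrightarrow> onefree A \<Longrightarrow> Fder m [F A] A"
  by (rule Fder.ax) (simp add: okF_def)

(* The side condition okF of the rules below follows from their premises, since none of
   them introduces 1. *)

lemma Fder_overL:
  assumes "Fder m G B" and "Fder m (plug c (D1 @ [F C] @ D2)) D"
  shows "Fder m (plug c (D1 @ [F (Over C B)] @ G @ D2)) D"
  by (rule Fder.overL[OF assms])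
    (use Fder_okF[OF assms(1)] Fder_okF[OF assms(2)] in \<open>auto simp: okF_def list_all_iff\<close>)

lemma Fder_prodL:
  assumes "Fder m (plug c (D1 @ [F A, F B] @ D2)) D"
  shows "Fder m (plug c (D1 @ [F (Prod A B)] @ D2)) D"
  by (rule Fder.prodL[OF assms])
    (use Fder_okF[OF assms] in \<open>auto simp: okF_def list_all_iff\<close>)

lemma Fder_boxL:
  assumes "Fder m (plug c (D1 @ [F A] @ D2)) B"
  shows "Fder m (plug c (D1 @ [Br [F (Box A)]] @ D2)) B"
  by (rule Fder.boxL[OF assms])
    (use Fder_okF[OF assms] in \<open>auto simp: okF_def list_all_iff\<close>)

lemma Fder_diaL:
  assumes "Fder m (plug c (D1 @ [Br [F A]] @ D2)) B"
  shows "Fder m (plug c (D1 @ [F (Dia A)] @ D2)) B"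
  by (rule Fder.diaL[OF assms])
    (use Fder_okF[OF assms] in \<open>auto simp: okF_def list_all_iff\<close>)

lemma Fder_bangL:
  assumes "Fder m (plug c (D1 @ [F A] @ D2)) C"
  shows "Fder m (plug c (D1 @ [F (Bang A)] @ D2)) C"
  by (rule Fder.bangL[OF assms])
    (use Fder_okF[OF assms] in \<open>auto simp: okF_def list_all_iff\<close>)

lemma Fder_bangC:
  assumes "Fder m (plug c ([F (Bang A)] @ G1 @ [Br ([F (Bang A)] @ G2)] @ G3)) C"
    and "m \<longrightarrow> G2 \<noteq> []"
  shows "Fder m (plug c ([F (Bang A)] @ G1 @ [Br [Br G2]] @ G3)) C"
  by (rule Fder.bangC[OF assms])
    (use Fder_okF[OF assms(1)] in \<open>auto simp: okF_def list_all_iff\<close>)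

lemma Fder_cut:
  assumes "Fder m P A" and "Fder m (plug c (G1 @ [F A] @ G2)) C"
  shows "Fder m (plug c (G1 @ P @ G2)) C"
  by (rule Fder.cut[OF assms])
    (use Fder_okF[OF assms(1)] Fder_okF[OF assms(2)] in \<open>auto simp: okF_def list_all_iff\<close>)

lemma Fder_Bang_move:
  "Fder m (G1 @ [F (Bang A)] @ G2 @ G3) C \<longleftrightarrow> Fder m (G1 @ G2 @ [F (Bang A)] @ G3) C"
proof
  show "Fder m (G1 @ G2 @ [F (Bang A)] @ G3) C" if "Fder m (G1 @ [F (Bang A)] @ G2 @ G3) C"
    using Fder.bangP1[of m Hole G1 A G2 G3 C] that Fder_okF[OF that] by (simp add: okF_def)
  show "Fder m (G1 @ [F (Bang A)] @ G2 @ G3) C" if "Fder m (G1 @ G2 @ [F (Bang A)] @ G3) C"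
    using Fder.bangP2[of m Hole G1 G2 A G3 C] that Fder_okF[OF that] by (simp add: okF_def)
qed

lemma Fder_Bang_Over_Over_elim:
  assumes G: "Fder m G B" and D: "Fder m D C"
  shows "Fder m (F (Bang (Over (Over C C) B)) # G @ D) C"
proof -
  have "Fder m [F C] C"
    using Fder_okF[OF D] by (intro Fder_axiom) (simp add: okF_def)
  then have "Fder m (F (Over C C) # D) C"
    using Fder_overL[OF D, of Hole "[]" C "[]"] by simp
  then have "Fder m (F (Over (Over C C) B) # G @ D) C"
    using Fder_overL[OF G, of Hole "[]" "Over C C" D] by simp
  then show ?thesis
    using Fder_bangL[of m Hole "[]" _ "G @ D"] by simp
qed

lemma Phi_Cons:
  "Phi s q (A # As) =
     [F (Bang (Over (Over (Var s) (Var s)) (Bang (Zf q A)))), F (Bang (Zf q A))] @ Phi s q As"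
  by (simp add: Phi_def)

lemma Fder_Phi_Var:
  assumes "\<forall>A \<in> set As. onefree A"
  shows "Fder m (Phi s q As @ [F (Var s)]) (Var s)"
  using assms
proof (induct As)
  case Nil
  have "Fder m [Br [Br [F (Var q)]]] (Dia (Dia (Var q)))"
    by (intro Fder.diaR Fder_axiom) (auto simp: okF_def)
  from Fder_Bang_Over_Over_elim[OF this Fder_axiom] show ?case
    by (simp add: Phi_def)
next
  case (Cons A As)
  have "Fder m [F (Bang (Zf q A))] (Bang (Zf q A))"
    using Cons.prems by (intro Fder_axiom) (simp add: Zf_def)
  from Fder_Bang_Over_Over_elim[OF this Cons.hyps] Cons.prems show ?case
    by (simp add: Phi_Cons)
qed

lemma Fder_Box_Over_apply:
  assumes "Fder m G B" and "m \<longrightarrow> onefree X"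
  shows "Fder m [Br (F (Over (Box X) B) # G)] X"
proof -
  have "Fder m [Br [F (Box X)]] X"
    using Fder_boxL[of m Hole "[]" X "[]" X] Fder_axiom[OF assms(2)] by simp
  then show ?thesis
    using Fder_overL[OF assms(1), of "CBr [] Hole []" "[]" "Box X" "[]" X] by simp
qed

lemma Fder_Zf_apply:
  "m \<longrightarrow> onefree A \<Longrightarrow>
     Fder m [Br [F (Zf q A), F (Var q)]] (Prod (Bang A) (Dia (Dia (Var q))))"
  unfolding Zf_def by (intro Fder_Box_Over_apply Fder_axiom) auto

lemma Fder_Zf_absorb:
  assumes "Fder m ([F (Bang (Zf q A))] @ G @ [F (Bang A), Br [Br [F (Var q)]]] @ D) C"
  shows "Fder m ([F (Bang (Zf q A))] @ G @ [Br [Br [F (Var q)]]] @ D) C"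
proof -
  let ?Z = "Zf q A"
  let ?L = "F (Bang ?Z) # G"
  have onefree: "m \<longrightarrow> onefree A"
    using Fder_okF[OF assms] by (simp add: okF_def)
  have "Fder m (?L @ [F (Bang A), Br [F (Dia (Var q))]] @ D) C"
    using assms Fder_diaL[of m "CBr (?L @ [F (Bang A)]) Hole D" "[]" "Var q" "[]" C] by simp
  then have "Fder m (?L @ [F (Bang A), F (Dia (Dia (Var q)))] @ D) C"
    using Fder_diaL[of m Hole "?L @ [F (Bang A)]" "Dia (Var q)" D C] by simp
  then have "Fder m (?L @ [F (Prod (Bang A) (Dia (Dia (Var q))))] @ D) C"
    using Fder_prodL[of m Hole ?L] by simp
  then have "Fder m (?L @ [Br [F ?Z, F (Var q)]] @ D) C"
    using Fder_cut[OF Fder_Zf_apply[OF onefree, of q], of Hole ?L D C] by simp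
  then have "Fder m (?L @ [Br [F (Bang ?Z), F (Var q)]] @ D) C"
    using Fder_bangL[of m "CBr ?L Hole D" "[]" ?Z "[F (Var q)]" C] by simp
  then show ?thesis
    using Fder_bangC[of m Hole ?Z G "[F (Var q)]" D C] by simp
qed

lemma Phi_split:
  assumes "A \<in> set As"
  obtains pre post where
    "Phi s q As = pre @ [F (Bang (Zf q A))] @ post @ [Br [Br [F (Var q)]]]"
proof -
  let ?blocks = "concat (map (\<lambda>A. [F (Bang (Over (Over (Var s) (Var s)) (Bang (Zf q A)))),
                                    F (Bang (Zf q A))]) As)"
  have "F (Bang (Zf q A)) \<in> set ?blocks"
    using assms by auto
  then obtain pre post where "?blocks = pre @ F (Bang (Zf q A)) # post"
    by (meson split_list)
  then show ?thesis
    by (intro that[of pre "post @ [F (Bang (Over (Over (Var s) (Var s)) (Dia (Dia (Var q)))))]"])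
      (simp add: Phi_def)
qed

lemma Fder_Phi_erase:
  assumes "A \<in> set As" and "Fder m (Phi s q As @ D1 @ [F A] @ D2) C"
  shows "Fder m (Phi s q As @ D1 @ D2) C"
proof -
  let ?Z = "F (Bang (Zf q A))"
  let ?qq = "Br [Br [F (Var q)]]"
  obtain pre post where Phi: "Phi s q As = pre @ [?Z] @ post @ [?qq]"
    using Phi_split[OF assms(1)] .
  have "Fder m (Phi s q As @ D1 @ [F (Bang A)] @ D2) C"
    using assms(2) Fder_bangL[of m Hole "Phi s q As @ D1" A D2 C] by simp
  then have "Fder m (pre @ [?Z] @ post @ [F (Bang A), ?qq] @ D1 @ D2) C"
    using Fder_Bang_move[of m "pre @ [?Z] @ post" A "?qq # D1" D2 C] by (simp add: Phi)
  then have "Fder m ([?Z] @ (pre @ post) @ [F (Bang A), ?qq] @ D1 @ D2) C"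
    using Fder_Bang_move[of m "[]" "Zf q A" pre "post @ [F (Bang A), ?qq] @ D1 @ D2" C] by simp
  then have "Fder m ([?Z] @ (pre @ post) @ [?qq] @ D1 @ D2) C"
    by (rule Fder_Zf_absorb)
  then show ?thesis
    using Fder_Bang_move[of m "[]" "Zf q A" pre "post @ [?qq] @ D1 @ D2" C] by (simp add: Phi)
qed

lemma Eder_okE: "Eder G C \<Longrightarrow> okE G C"
  by (induct rule: Eder.induct) (auto simp: okE_def)

lemma Eder_axiom: "bracketfree A \<Longrightarrow> Eder [A] A"
  by (rule Eder.ax) (simp add: okE_def)

(* Likewise, okE of the conclusion follows from the premises (for !W, given bracketfree A). *)

lemma Eder_overR:
  assumes "Eder (G @ [B]) C"
  shows "Eder G (Over C B)"
  by (rule Eder.overR[OF assms])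
    (use Eder_okE[OF assms] in \<open>simp add: okE_def\<close>)

lemma Eder_prodR:
  assumes "Eder D A" and "Eder G B"
  shows "Eder (D @ G) (Prod A B)"
  by (rule Eder.prodR[OF assms])
    (use Eder_okE[OF assms(1)] Eder_okE[OF assms(2)] in \<open>simp add: okE_def\<close>)

lemma Eder_oneL:
  assumes "Eder (D1 @ D2) A"
  shows "Eder (D1 @ [One] @ D2) A"
  by (rule Eder.oneL[OF assms])
    (use Eder_okE[OF assms] in \<open>simp add: okE_def\<close>)

lemma Eder_bangR:
  assumes "Eder (map Bang As) B"
  shows "Eder (map Bang As) (Bang B)"
  by (rule Eder.bangR[OF assms])
    (use Eder_okE[OF assms] in \<open>simp add: okE_def\<close>)

lemma Eder_bangW:
  assumes "Eder (D1 @ D2) C" and "bracketfree A"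
  shows "Eder (D1 @ [Bang A] @ D2) C"
  by (rule Eder.bangW[OF assms(1)])
    (use Eder_okE[OF assms(1)] assms(2) in \<open>simp add: okE_def\<close>)

lemma Eder_cut:
  assumes "Eder P A" and "Eder (G1 @ [A] @ G2) C"
  shows "Eder (G1 @ P @ G2) C"
  by (rule Eder.cut[OF assms])
    (use Eder_okE[OF assms(1)] Eder_okE[OF assms(2)] in \<open>simp add: okE_def\<close>)

lemma Eder_One_One: "Eder [One] One"
  using Eder_oneL[of "[]" "[]"] Eder.oneR by simp

lemma Eder_Bang_One: "bracketfree A \<Longrightarrow> Eder [Bang A] One"
  using Eder_bangW[of "[]" "[]"] Eder.oneR by simp

lemma Eder_Bang_Over_Over_intro:
  assumes "Eder [B] One" and "bracketfree C"
  shows "Eder [] (Bang (Over (Over C C) B))"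
proof -
  have "Eder [One, C] C"
    using Eder_oneL[of "[]" "[C]"] Eder_axiom[OF assms(2)] by simp
  then have "Eder [B, C] C"
    using Eder_cut[OF assms(1), of "[]" "[C]"] by simp
  then have "Eder [] (Over (Over C C) B)"
    by (simp add: Eder_overR)
  then show ?thesis
    using Eder_bangR[of "[]"] by simp
qed

lemma Eder_Bang_Over_Prod_One:
  assumes "bracketfree A"
  shows "Eder [Bang A] (Bang (Over (Prod (Bang A) One) One))"
proof -
  have "Eder [Bang A] (Prod (Bang A) One)"
    using Eder_prodR[OF Eder_axiom Eder.oneR] assms by simp
  then have "Eder [Bang A, One] (Prod (Bang A) One)"
    using Eder_oneL[of "[Bang A]" "[]"] by simp
  then show ?thesis
    using Eder_bangR[of "[A]"] Eder_overR by simp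
qed

lemma Eder_prodl_Cons:
  "Eder D E \<Longrightarrow> Eder G (prodl Es) \<Longrightarrow> Es \<noteq> [] \<Longrightarrow> Eder (D @ G) (prodl (E # Es))"
  by (cases Es) (simp_all add: Eder_prodR)

lemma bracketfree_pi_q: "bracketfree (pi_q q A)"
  by (induct A) auto

lemma Eder_pi_Phi:
  assumes "\<forall>A \<in> set As. pi_q q A = A"
  shows "Eder (map Bang As) (prodl (pi_mf q (Phi s q As)))"
  using assms
proof (induct As)
  case Nil
  have "Eder [] (Bang (Over (Over (pi_q q (Var s)) (pi_q q (Var s))) One))"
    by (intro Eder_Bang_Over_Over_intro Eder_One_One bracketfree_pi_q)
  from Eder_prodR[OF this Eder.oneR] show ?case
    by (simp add: Phi_def pi_mf_def)
next
  case (Cons A As)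
  let ?S = "pi_q q (Var s)"
  let ?Z = "pi_q q (Zf q A)"
  have pi_A: "pi_q q A = A"
    using Cons.prems by simp
  have "Eder [Bang A] (Bang ?Z)"
    using Eder_Bang_Over_Prod_One bracketfree_pi_q[of q A] by (simp add: Zf_def pi_A)
  moreover have "Eder [] (Bang (Over (Over ?S ?S) (Bang ?Z)))"
    by (intro Eder_Bang_Over_Over_intro Eder_Bang_One bracketfree_pi_q)
  ultimately have "Eder ([] @ [Bang A] @ map Bang As)
    (prodl (Bang (Over (Over ?S ?S) (Bang ?Z)) # Bang ?Z # pi_mf q (Phi s q As)))"
    using Cons by (intro Eder_prodl_Cons) (auto simp: Phi_def pi_mf_def)
  then show ?case
    by (simp add: Phi_Cons pi_mf_def)
qed

lemma onefree_if_lambek_noq: "lambek_noq q A \<Longrightarrow> onefree A"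
  by (induct A) auto

lemma pi_q_if_lambek_noq: "lambek_noq q A \<Longrightarrow> pi_q q A = A"
  by (induct A) auto

theorem proposition8:
  fixes s q :: nat and As :: "fm list" and restr :: bool
  assumes "s \<noteq> q"
    and "\<forall>A \<in> set As. lambek_noq q A"
  shows "Fder restr (Phi s q As @ [F (Var s)]) (Var s)
         \<and> (\<forall>i < length As. \<forall>D1 D2 C.
              Fder restr (Phi s q As @ D1 @ [F (As ! i)] @ D2) C
              \<longrightarrow> Fder restr (Phi s q As @ D1 @ D2) C)
         \<and> Eder (map Bang As) (prodl (pi_mf q (Phi s q As)))"
proof -
  have "\<forall>A \<in> set As. onefree A"
    using assms(2) onefree_if_lambek_noq by blast
  moreover have "\<forall>A \<in> set As. pi_q q A = A"
    using assms(2) pi_q_if_lambek_noq by blast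
  ultimately show ?thesis
    using Fder_Phi_Var Fder_Phi_erase[OF nth_mem] Eder_pi_Phi by blast
qed

end
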